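(* Let $\widetilde{\mathfrak A}$ and $\widetilde\Omega$ be open subsets of $\mathbb R^d$, with $\widetilde{\mathfrak A}$ connected and $\widetilde\Omega$ convex, and let $F:\widetilde{\mathfrak A}\to\widetilde\Omega$ be a $\mathcal C^2$ homeomorphism with $\det F'\neq0$ on $\widetilde{\mathfrak A}$. Let $L_*,L_0\in\widetilde\Omega$ and let $A_*\in\widetilde{\mathfrak A}$ be the unique solution of $F(A_* )=L_*$. Then for every $\varepsilon>0$ there exist $\sigma_0>0$ and an integer $N_0\ge1$ such that for every integer $n>N_0$ and every $\sigma\in(0,\sigma_0)$, the continuation scheme described in the context with parameters $n$ and $\sigma$ is well defined, the Newton method terminates at each of its $n$ steps, and the final output satisfies $|A^{(n)}_{fin}-A_*|<\varepsilon$.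
   Context: Newton method for solving $F(A)=\widehat L$ with tolerance $\sigma>0$ and starting point $A_{st}$: set $A^{(0)}=A_{st}$ and $A^{(j+1)}=A^{(j)}-F'(A^{(j)})^{-1}\big(F(A^{(j)})-\widehat L\big)$, $j\ge0$; the process stops at the first $j$ with $|F(A^{(j)})-\widehat L|<\sigma$, and $A_{fin}:=A^{(j)}$ is its output. Continuation scheme with parameters $n\ge1$ and $\sigma>0$: let $A_0=F^{-1}(L_0)$ and $L_k=((n-k)L_0+kL_* )/n$ for $k=0,\dots,n$. For $k=1,\dots,n$, run the Newton method for $F(A)=L_k$ with tolerance $\sigma$ and starting point $A^{(k)}_{st}=A^{(k-1)}_{fin}$ (with $A^{(0)}_{fin}:=A_0$), and let $A^{(k)}_{fin}$ be its output. The final output is $A^{(n)}_{fin}$. *)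

theory Defs
  imports "HOL-Analysis.Analysis"
begin

primrec newton_iter ::
  "(real^'d \<Rightarrow> real^'d) \<Rightarrow> (real^'d \<Rightarrow> real^'d^'d) \<Rightarrow> real^'d \<Rightarrow> real^'d \<Rightarrow> nat \<Rightarrow> real^'d"
where
  "newton_iter F J Lh a0 0 = a0"
| "newton_iter F J Lh a0 (Suc j) =
     newton_iter F J Lh a0 j - matrix_inv (J (newton_iter F J Lh a0 j)) *v (F (newton_iter F J Lh a0 j) - Lh)"

definition newton_terminates ::
  "(real^'d \<Rightarrow> real^'d) \<Rightarrow> (real^'d \<Rightarrow> real^'d^'d) \<Rightarrow> (real^'d) set \<Rightarrow> real^'d \<Rightarrow> real \<Rightarrow> real^'d \<Rightarrow> bool"
where
  "newton_terminates F J Adom Lh \<sigma> a0 \<longleftrightarrow>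
     (\<exists>j. (\<forall>i\<le>j. newton_iter F J Lh a0 i \<in> Adom) \<and> norm (F (newton_iter F J Lh a0 j) - Lh) < \<sigma>)"

definition newton_output ::
  "(real^'d \<Rightarrow> real^'d) \<Rightarrow> (real^'d \<Rightarrow> real^'d^'d) \<Rightarrow> real^'d \<Rightarrow> real \<Rightarrow> real^'d \<Rightarrow> real^'d"
where
  "newton_output F J Lh \<sigma> a0 =
     newton_iter F J Lh a0 (LEAST j. norm (F (newton_iter F J Lh a0 j) - Lh) < \<sigma>)"

definition cont_target :: "nat \<Rightarrow> real^'d \<Rightarrow> real^'d \<Rightarrow> nat \<Rightarrow> real^'d" where
  "cont_target n L0 Lstar k = (1 / real n) *\<^sub>R (real (n - k) *\<^sub>R L0 + real k *\<^sub>R Lstar)"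

primrec cont_fin ::
  "(real^'d \<Rightarrow> real^'d) \<Rightarrow> (real^'d \<Rightarrow> real^'d^'d) \<Rightarrow> (real^'d) set \<Rightarrow> real^'d \<Rightarrow> real^'d
    \<Rightarrow> nat \<Rightarrow> real \<Rightarrow> nat \<Rightarrow> real^'d"
where
  "cont_fin F J Adom L0 Lstar n \<sigma> 0 = inv_into Adom F L0"
| "cont_fin F J Adom L0 Lstar n \<sigma> (Suc k) =
     newton_output F J (cont_target n L0 Lstar (Suc k)) \<sigma> (cont_fin F J Adom L0 Lstar n \<sigma> k)"

definition cont_well_defined ::
  "(real^'d \<Rightarrow> real^'d) \<Rightarrow> (real^'d \<Rightarrow> real^'d^'d) \<Rightarrow> (real^'d) set \<Rightarrow> real^'d \<Rightarrow> real^'d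
    \<Rightarrow> nat \<Rightarrow> real \<Rightarrow> bool"
where
  "cont_well_defined F J Adom L0 Lstar n \<sigma> \<longleftrightarrow>
     (\<forall>k\<in>{1..n}. newton_terminates F J Adom (cont_target n L0 Lstar k) \<sigma>
                   (cont_fin F J Adom L0 Lstar n \<sigma> (k - 1)))"

end

theory Submission
  imports Defs
begin

text \<open>Along the compact path of roots \<open>a(t) = F\<^sup>-\<^sup>1((1 - t) L0 + t Lstar)\<close>, \<open>F'\<close> is uniformly
  invertible and uniformly continuous on a fixed neighbourhood. Hence there are \<open>m > 0\<close> and
  \<open>\<rho> > 0\<close> such that around every root \<open>a\<close> of the path Newton's method for \<open>F(x) = F(a)\<close>
  halves the distance to \<open>a\<close> from any starting point in \<open>cball a \<rho>\<close>, and a run stopped at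
  residual \<open>< \<sigma>\<close> ends within \<open>2\<sigma>/m\<close> of its root. Once \<open>n\<close> is so large that consecutive
  roots are less than \<open>\<rho>/2\<close> apart and \<open>\<sigma> < m\<rho>/4\<close>, the output of each stage lies in the
  contraction ball of the next root, so the errors do not accumulate and the final error is
  below \<open>2\<sigma>/m\<close>.\<close>

lemma onorm_matrix_le_norm:
  fixes A :: "real^'n^'m"
  shows "onorm ((*v) A) \<le> real CARD('m) * real CARD('n) * norm A"
proof (rule onorm_le_matrix_component)
  fix i j
  have "\<bar>A $ i $ j\<bar> \<le> norm (A $ i)" by (rule component_le_norm_cart)
  also have "\<dots> \<le> norm A" by (rule Finite_Cartesian_Product.norm_nth_le)
  finally show "\<bar>A $ i $ j\<bar> \<le> norm A" .
qed

lemma matrix_inv_cancel: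
  fixes A :: "real^'n^'n"
  assumes "det A \<noteq> 0"
  shows matrix_vector_mul_matrix_inv: "A *v (matrix_inv A *v v) = v"
    and matrix_inv_matrix_vector_mul: "matrix_inv A *v (A *v v) = v"
proof -
  have "\<exists>A'. A ** A' = mat 1 \<and> A' ** A = mat 1"
    using assms invertible_det_nz unfolding invertible_def by blast
  then have "A ** matrix_inv A = mat 1 \<and> matrix_inv A ** A = mat 1"
    unfolding matrix_inv_def by (rule someI_ex)
  then show "A *v (matrix_inv A *v v) = v" "matrix_inv A *v (A *v v) = v"
    by (simp_all add: matrix_vector_mul_assoc)
qed

lemma compact_matrix_family_bounded_below:
  fixes M :: "'a::topological_space \<Rightarrow> real^'n^'n"
  assumes "compact K" and "continuous_on K M" and "\<And>x. x \<in> K \<Longrightarrow> det (M x) \<noteq> 0"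
  obtains m where "m > 0" and "\<And>x h. x \<in> K \<Longrightarrow> m * norm h \<le> norm (M x *v h)"
proof (cases "K = {}")
  case True
  then show ?thesis using that[of 1] by simp
next
  case False
  obtain u :: "real^'n" where u: "u \<in> sphere 0 1" using vector_choose_size[of 1] by auto
  obtain x where "x \<in> K" using False by blast
  then have ne: "K \<times> sphere (0::real^'n) 1 \<noteq> {}" using u by blast
  have "continuous_on (K \<times> sphere 0 1) (\<lambda>z. norm (M (fst z) *v snd z))"
    unfolding matrix_vector_mult_def
    by (intro continuous_intros continuous_on_component
        continuous_on_compose2[OF assms(2) continuous_on_fst]) auto
  then obtain z0 where z0: "z0 \<in> K \<times> sphere 0 1"
    and min: "\<And>z. z \<in> K \<times> sphere 0 1 \<Longrightarrow> norm (M (fst z0) *v snd z0) \<le> norm (M (fst z) *v snd z)"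
    using continuous_attains_inf[OF compact_Times[OF assms(1) compact_sphere] ne] by blast
  define m where "m = norm (M (fst z0) *v snd z0)"
  have "m > 0"
  proof -
    have "snd z0 = matrix_inv (M (fst z0)) *v (M (fst z0) *v snd z0)"
      using z0 assms(3) matrix_inv_matrix_vector_mul by (metis mem_Sigma_iff prod.collapse)
    then have "M (fst z0) *v snd z0 \<noteq> 0" using z0 by auto
    then show ?thesis unfolding m_def by simp
  qed
  moreover have "m * norm h \<le> norm (M x *v h)" if "x \<in> K" for x h
  proof (cases "h = 0")
    case False
    have "m \<le> norm (M x *v ((1 / norm h) *\<^sub>R h))"
      unfolding m_def using min[of "(x, (1 / norm h) *\<^sub>R h)"] that False by simp
    also have "\<dots> = norm (M x *v h) / norm h" by (simp add: matrix_vector_mult_scaleR)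
    finally show ?thesis using False by (simp add: field_simps)
  qed simp
  ultimately show ?thesis using that by blast
qed

lemma matrix_linearization_error_le:
  fixes F :: "real^'n \<Rightarrow> real^'m"
  assumes "convex S" and "a \<in> S" and "x \<in> S" and "z \<in> S"
    and deriv: "\<And>y. y \<in> S \<Longrightarrow> (F has_derivative (\<lambda>h. F' y *v h)) (at y within S)"
    and close: "\<And>y. y \<in> S \<Longrightarrow> real CARD('m) * real CARD('n) * norm (F' y - F' z) \<le> e"
  shows "norm (F x - F a - F' z *v (x - a)) \<le> e * norm (x - a)"
proof -
  have "norm (F x - F a - (\<lambda>h. F' z *v h) (x - a)) \<le> norm (x - a) * e"
  proof (rule differentiable_bound_linearization[where S=S and f'="\<lambda>y h. F' y *v h", OF _ deriv _ \<open>z \<in> S\<close>])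
    show "a + t *\<^sub>R (x - a) \<in> S" if "t \<in> {0..1}" for t
      using convexD_alt[OF \<open>convex S\<close> \<open>a \<in> S\<close> \<open>x \<in> S\<close>, of t] that
      by (simp add: algebra_simps)
    show "onorm ((\<lambda>h. F' y *v h) - (\<lambda>h. F' z *v h)) \<le> e" if "y \<in> S" for y
    proof -
      have "(\<lambda>h. F' y *v h) - (\<lambda>h. F' z *v h) = (*v) (F' y - F' z)"
        by (rule ext) (simp add: matrix_vector_mult_diff_rdistrib)
      then show ?thesis using onorm_matrix_le_norm[of "F' y - F' z"] close[OF that] by simp
    qed
  qed
  then show ?thesis by (simp add: mult.commute)
qed

text \<open>The factor \<open>m / 2\<close> makes the Newton step for \<open>F(x) = F(a)\<close> contract towards \<open>a\<close> by \<open>1/2\<close>.\<close>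
definition newton_ball ::
  "(real^'d \<Rightarrow> real^'d) \<Rightarrow> (real^'d \<Rightarrow> real^'d^'d) \<Rightarrow> (real^'d) set \<Rightarrow> real \<Rightarrow> real^'d \<Rightarrow> real \<Rightarrow> bool"
where
  "newton_ball F F' Adom m a \<rho> \<longleftrightarrow>
     cball a \<rho> \<subseteq> Adom \<and>
     (\<forall>x\<in>cball a \<rho>. det (F' x) \<noteq> 0 \<and> (\<forall>h. m * norm h \<le> norm (F' x *v h))) \<and>
     (\<forall>x\<in>cball a \<rho>. \<forall>z\<in>cball a \<rho>. norm (F x - F a - F' z *v (x - a)) \<le> m / 2 * norm (x - a))"

lemma newton_ball_dist_le:
  assumes ball: "newton_ball F F' Adom m a \<rho>" and "m > 0" and x: "x \<in> cball a \<rho>"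
  shows "norm (x - a) \<le> 2 / m * norm (F x - F a)"
proof -
  have a: "a \<in> cball a \<rho>" using x zero_le_dist[of a x] by (simp only: mem_cball dist_self)
  have "m * norm (x - a) \<le> norm (F' a *v (x - a))"
    using ball a unfolding newton_ball_def by blast
  also have "\<dots> = norm ((F x - F a) - (F x - F a - F' a *v (x - a)))" by simp
  also have "\<dots> \<le> norm (F x - F a) + norm (F x - F a - F' a *v (x - a))"
    by (rule norm_triangle_ineq4)
  also have "\<dots> \<le> norm (F x - F a) + m / 2 * norm (x - a)"
    using ball x a unfolding newton_ball_def by simp
  finally show ?thesis using \<open>m > 0\<close> by (simp add: field_simps)
qed

lemma newton_step_contracts:
  assumes ball: "newton_ball F F' Adom m a \<rho>" and "m > 0" and x: "x \<in> cball a \<rho>"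
  shows "norm (x - matrix_inv (F' x) *v (F x - F a) - a) \<le> norm (x - a) / 2"
proof -
  define w where "w = x - matrix_inv (F' x) *v (F x - F a) - a"
  have "det (F' x) \<noteq> 0" using ball x unfolding newton_ball_def by blast
  then have "F' x *v w = - (F x - F a - F' x *v (x - a))"
    unfolding w_def by (simp add: matrix_vector_mult_diff_distrib matrix_vector_mul_matrix_inv)
  then have "m * norm w \<le> norm (F x - F a - F' x *v (x - a))"
    using ball x unfolding newton_ball_def by (metis norm_minus_cancel)
  also have "\<dots> \<le> m / 2 * norm (x - a)"
    using ball x unfolding newton_ball_def by blast
  finally show ?thesis using \<open>m > 0\<close> unfolding w_def by (simp add: field_simps)
qed

lemma newton_iter_contracts:
  assumes ball: "newton_ball F F' Adom m a \<rho>" and "m > 0" and x0: "x0 \<in> cball a \<rho>"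
  shows "norm (newton_iter F F' (F a) x0 j - a) \<le> (1 / 2) ^ j * norm (x0 - a)"
proof (induction j)
  case (Suc j)
  have "norm (newton_iter F F' (F a) x0 j - a) \<le> norm (x0 - a)"
    using Suc.IH by (rule order_trans) (simp add: power_le_one mult_left_le_one_le)
  then have "newton_iter F F' (F a) x0 j \<in> cball a \<rho>"
    using x0 by (simp add: dist_norm norm_minus_commute)
  from newton_step_contracts[OF ball \<open>m > 0\<close> this]
  have "norm (newton_iter F F' (F a) x0 (Suc j) - a) \<le> norm (newton_iter F F' (F a) x0 j - a) / 2"
    by simp
  then show ?case using Suc.IH by simp
qed simp

lemma newton_iter_in_ball:
  assumes "newton_ball F F' Adom m a \<rho>" and "m > 0" and x0: "x0 \<in> cball a \<rho>"
  shows "newton_iter F F' (F a) x0 j \<in> cball a \<rho>"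
proof -
  have "norm (newton_iter F F' (F a) x0 j - a) \<le> norm (x0 - a)"
    using newton_iter_contracts[OF assms, of j]
    by (rule order_trans) (simp add: power_le_one mult_left_le_one_le)
  then show ?thesis using x0 by (simp add: dist_norm norm_minus_commute)
qed

lemma newton_ball_newton_output:
  assumes ball: "newton_ball F F' Adom m a \<rho>" and "m > 0" and "\<sigma> > 0"
    and "isCont F a" and x0: "x0 \<in> cball a \<rho>"
  shows "newton_terminates F F' Adom (F a) \<sigma> x0"
    and "norm (newton_output F F' (F a) \<sigma> x0 - a) < 2 / m * \<sigma>"
proof -
  let ?x = "newton_iter F F' (F a) x0"
  have "(\<lambda>j. (1 / 2) ^ j * norm (x0 - a)) \<longlonglongrightarrow> 0"
    by (rule tendsto_mult_left_zero[OF LIMSEQ_power_zero]) simp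
  with newton_iter_contracts[OF ball \<open>m > 0\<close> x0] have "(\<lambda>j. ?x j - a) \<longlonglongrightarrow> 0"
    by (intro Lim_null_comparison[OF always_eventually, of "\<lambda>j. ?x j - a"]) auto
  then have "?x \<longlonglongrightarrow> a" by (rule LIM_zero_cancel)
  then have "(\<lambda>j. F (?x j)) \<longlonglongrightarrow> F a"
    using \<open>isCont F a\<close> by (rule isCont_tendsto_compose[rotated])
  then obtain j where j: "norm (F (?x j) - F a) < \<sigma>"
    using \<open>\<sigma> > 0\<close> LIMSEQ_D by blast
  have in_ball: "?x i \<in> cball a \<rho>" for i by (rule newton_iter_in_ball[OF ball \<open>m > 0\<close> x0])
  moreover have "cball a \<rho> \<subseteq> Adom" using ball unfolding newton_ball_def by blast
  ultimately show "newton_terminates F F' Adom (F a) \<sigma> x0"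
    unfolding newton_terminates_def using j by blast
  let ?out = "newton_output F F' (F a) \<sigma> x0"
  have res: "norm (F ?out - F a) < \<sigma>"
    unfolding newton_output_def using j by (rule LeastI)
  have "?out \<in> cball a \<rho>"
    unfolding newton_output_def by (rule in_ball)
  then have "norm (?out - a) \<le> 2 / m * norm (F ?out - F a)"
    by (rule newton_ball_dist_le[OF ball \<open>m > 0\<close>])
  also have "\<dots> < 2 / m * \<sigma>"
    using res by (rule mult_strict_left_mono) (use \<open>m > 0\<close> in simp)
  finally show "norm (?out - a) < 2 / m * \<sigma>" .
qed

lemma uniform_newton_balls:
  fixes F :: "real^'d \<Rightarrow> real^'d"
  assumes "open Adom" and "compact P" and "P \<subseteq> Adom"
    and deriv: "\<And>x. x \<in> Adom \<Longrightarrow> (F has_derivative (\<lambda>h. F' x *v h)) (at x)"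
    and "continuous_on Adom F'" and det: "\<And>x. x \<in> Adom \<Longrightarrow> det (F' x) \<noteq> 0"
  obtains m \<rho> where "m > 0" and "\<rho> > 0" and "\<And>a. a \<in> P \<Longrightarrow> newton_ball F F' Adom m a \<rho>"
proof -
  obtain r where "r > 0" and rA: "(\<Union>a\<in>P. cball a r) \<subseteq> Adom"
    using compact_subset_open_imp_cball_epsilon_subset[OF assms(2,1,3)] by blast
  define K where "K = (\<Union>a\<in>P. cball a r)"
  have "compact K" unfolding K_def by (rule compact_minkowski_sum_cball[OF \<open>compact P\<close>])
  have KA: "K \<subseteq> Adom" using rA unfolding K_def .
  have contK: "continuous_on K F'" using continuous_on_subset[OF \<open>continuous_on Adom F'\<close> KA] .
  obtain m where "m > 0" and low: "\<And>x h. x \<in> K \<Longrightarrow> m * norm h \<le> norm (F' x *v h)"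
    using compact_matrix_family_bounded_below[OF \<open>compact K\<close> contK] det KA by blast
  define c where "c = real CARD('d) * real CARD('d)"
  have "c > 0" unfolding c_def by simp
  obtain d where "d > 0"
    and ucont: "\<And>x x'. x \<in> K \<Longrightarrow> x' \<in> K \<Longrightarrow> dist x' x < d \<Longrightarrow> dist (F' x') (F' x) < m / (2 * c)"
    using compact_uniformly_continuous[OF contK \<open>compact K\<close>] \<open>m > 0\<close> \<open>c > 0\<close>
    unfolding uniformly_continuous_on_def by (metis divide_pos_pos mult_pos_pos zero_less_numeral)
  define \<rho> where "\<rho> = min r (d / 3)"
  have "\<rho> > 0" unfolding \<rho>_def using \<open>r > 0\<close> \<open>d > 0\<close> by simp
  have "newton_ball F F' Adom m a \<rho>" if "a \<in> P" for a
  proof -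
    have ballK: "cball a \<rho> \<subseteq> K" using that unfolding K_def \<rho>_def by force
    have "norm (F x - F a - F' z *v (x - a)) \<le> m / 2 * norm (x - a)"
      if x: "x \<in> cball a \<rho>" and z: "z \<in> cball a \<rho>" for x z
    proof (rule matrix_linearization_error_le[OF convex_cball _ x z])
      show "a \<in> cball a \<rho>" using \<open>\<rho> > 0\<close> by simp
      show "(F has_derivative (\<lambda>h. F' y *v h)) (at y within cball a \<rho>)" if "y \<in> cball a \<rho>" for y
        using deriv ballK KA that by (blast intro: has_derivative_at_withinI)
      show "real CARD('d) * real CARD('d) * norm (F' y - F' z) \<le> m / 2" if y: "y \<in> cball a \<rho>" for y
      proof -
        have "dist y z < d"
          using dist_triangle3[of y z a] y z \<open>d > 0\<close> unfolding \<rho>_def by (simp add: dist_commute)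
        moreover have "y \<in> K" and "z \<in> K" using ballK y z by auto
        ultimately have "norm (F' y - F' z) < m / (2 * c)"
          using ucont by (simp add: dist_norm)
        then show ?thesis using \<open>c > 0\<close> unfolding c_def[symmetric] by (simp add: field_simps)
      qed
    qed
    then show ?thesis unfolding newton_ball_def using ballK KA low det by blast
  qed
  then show ?thesis using that \<open>m > 0\<close> \<open>\<rho> > 0\<close> by blast
qed

lemma cont_target_eq:
  assumes "0 < n" and "k \<le> n"
  shows "cont_target n L0 Lstar k = (1 - real k / real n) *\<^sub>R L0 + (real k / real n) *\<^sub>R Lstar"
proof -
  have "real (n - k) / real n = 1 - real k / real n"
    using assms by (simp add: of_nat_diff field_simps)
  then show ?thesis unfolding cont_target_def by (simp add: scaleR_add_right)
qed

lemma cont_target_in_segment: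
  assumes "0 < n" and "k \<le> n"
  shows "cont_target n L0 Lstar k \<in> closed_segment L0 Lstar"
  unfolding in_segment cont_target_eq[OF assms(1) assms(2)]
  using assms by (intro exI[where x="real k / real n"]) auto

lemma dist_cont_target_Suc:
  assumes "Suc k \<le> n"
  shows "dist (cont_target n L0 Lstar (Suc k)) (cont_target n L0 Lstar k) = dist L0 Lstar / real n"
proof -
  have "0 < n" using assms by simp
  have "cont_target n L0 Lstar (Suc k) - cont_target n L0 Lstar k = (1 / real n) *\<^sub>R (Lstar - L0)"
  proof -
    have "real (Suc k) / real n = real k / real n + 1 / real n" by (simp add: add_divide_distrib)
    then show ?thesis
      unfolding cont_target_eq[OF \<open>0 < n\<close> assms] cont_target_eq[OF \<open>0 < n\<close> Suc_leD[OF assms]]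
      by (simp add: algebra_simps)
  qed
  then show ?thesis by (simp add: dist_norm norm_minus_commute)
qed

lemma cont_fin_tracks_roots:
  fixes F :: "real^'d \<Rightarrow> real^'d" and a :: "nat \<Rightarrow> real^'d"
  assumes "m > 0" and "\<sigma> > 0" and "4 * \<sigma> \<le> m * \<rho>"
    and roots: "\<And>k. k \<le> n \<Longrightarrow>
       F (a k) = cont_target n L0 Lstar k \<and> isCont F (a k) \<and> newton_ball F F' Adom m (a k) \<rho>"
    and start: "inv_into Adom F L0 = a 0"
    and steps: "\<And>k. k < n \<Longrightarrow> dist (a (Suc k)) (a k) < \<rho> / 2"
  shows "cont_well_defined F F' Adom L0 Lstar n \<sigma>"
    and "norm (cont_fin F F' Adom L0 Lstar n \<sigma> n - a n) \<le> 2 / m * \<sigma>"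
proof -
  let ?x = "cont_fin F F' Adom L0 Lstar n \<sigma>"
  have stage: "newton_terminates F F' Adom (cont_target n L0 Lstar (Suc k)) \<sigma> (?x k)
      \<and> norm (?x (Suc k) - a (Suc k)) < 2 / m * \<sigma>"
    if "k < n" and near: "norm (?x k - a k) \<le> 2 / m * \<sigma>" for k
  proof -
    have "dist (a (Suc k)) (?x k) \<le> dist (a (Suc k)) (a k) + dist (a k) (?x k)"
      by (rule dist_triangle)
    also have "\<dots> < \<rho> / 2 + 2 / m * \<sigma>"
      using steps[OF \<open>k < n\<close>] near by (simp add: dist_norm norm_minus_commute)
    also have "2 / m * \<sigma> \<le> \<rho> / 2"
      using \<open>4 * \<sigma> \<le> m * \<rho>\<close> \<open>m > 0\<close> by (simp add: field_simps)
    finally have x: "?x k \<in> cball (a (Suc k)) \<rho>" by simp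
    from roots[of "Suc k"] \<open>k < n\<close> have root: "F (a (Suc k)) = cont_target n L0 Lstar (Suc k)"
      and cont: "isCont F (a (Suc k))" and ball: "newton_ball F F' Adom m (a (Suc k)) \<rho>" by auto
    from newton_ball_newton_output[OF ball \<open>m > 0\<close> \<open>\<sigma> > 0\<close> cont x] show ?thesis
      unfolding root by simp
  qed
  have near: "norm (?x k - a k) \<le> 2 / m * \<sigma>" if "k \<le> n" for k
    using that
  proof (induction k)
    case 0
    show ?case using start \<open>m > 0\<close> \<open>\<sigma> > 0\<close> by simp
  next
    case (Suc k)
    then show ?case using stage[of k] by simp
  qed
  show "cont_well_defined F F' Adom L0 Lstar n \<sigma>"
    unfolding cont_well_defined_def
  proof
    fix k assume "k \<in> {1..n}"
    then obtain j where "k = Suc j" and "j < n" by (cases k) auto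
    then show "newton_terminates F F' Adom (cont_target n L0 Lstar k) \<sigma> (?x (k - 1))"
      using stage[of j] near[of j] by simp
  qed
  show "norm (?x n - a n) \<le> 2 / m * \<sigma>" by (rule near) simp
qed

lemma cont_fin_converges:
  fixes F G :: "real^'d \<Rightarrow> real^'d"
  assumes "continuous_on (closed_segment L0 Lstar) G"
    and roots: "\<And>y. y \<in> closed_segment L0 Lstar \<Longrightarrow>
       F (G y) = y \<and> isCont F (G y) \<and> newton_ball F F' Adom m (G y) \<rho>"
    and "m > 0" and "\<rho> > 0" and start: "inv_into Adom F L0 = G L0" and "\<epsilon> > 0"
  obtains \<sigma>0 N0 where "\<sigma>0 > 0" and "N0 \<ge> 1"
    and "\<And>n \<sigma>. N0 < n \<Longrightarrow> 0 < \<sigma> \<Longrightarrow> \<sigma> < \<sigma>0 \<Longrightarrow>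
       cont_well_defined F F' Adom L0 Lstar n \<sigma> \<and> norm (cont_fin F F' Adom L0 Lstar n \<sigma> n - G Lstar) < \<epsilon>"
proof -
  let ?S = "closed_segment L0 Lstar"
  obtain dG where "dG > 0"
    and ucont: "\<And>y y'. y \<in> ?S \<Longrightarrow> y' \<in> ?S \<Longrightarrow> dist y' y < dG \<Longrightarrow> dist (G y') (G y) < \<rho> / 2"
    using compact_uniformly_continuous[OF assms(1) compact_segment] \<open>\<rho> > 0\<close>
    unfolding uniformly_continuous_on_def by (metis half_gt_zero)
  define \<sigma>0 where "\<sigma>0 = min (m * \<rho> / 4) (m * \<epsilon> / 2)"
  define N0 where "N0 = nat \<lceil>dist L0 Lstar / dG\<rceil> + 1"
  have main: "cont_well_defined F F' Adom L0 Lstar n \<sigma> \<and> norm (cont_fin F F' Adom L0 Lstar n \<sigma> n - G Lstar) < \<epsilon>"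
    if "N0 < n" and "0 < \<sigma>" and "\<sigma> < \<sigma>0" for n \<sigma>
  proof -
    have "0 < n" using that by simp
    let ?a = "\<lambda>k. G (cont_target n L0 Lstar k)"
    have "dist L0 Lstar / dG < real n"
      using \<open>N0 < n\<close> unfolding N0_def by linarith
    then have step: "dist L0 Lstar / real n < dG"
      using \<open>0 < n\<close> \<open>dG > 0\<close> by (simp add: field_simps)
    have bounds: "4 * \<sigma> \<le> m * \<rho>" "2 / m * \<sigma> < \<epsilon>"
      using \<open>\<sigma> < \<sigma>0\<close> \<open>m > 0\<close> unfolding \<sigma>0_def by (auto simp: field_simps)
    have roots_a: "F (?a k) = cont_target n L0 Lstar k \<and> isCont F (?a k) \<and> newton_ball F F' Adom m (?a k) \<rho>"
      if "k \<le> n" for k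
      using roots cont_target_in_segment[OF \<open>0 < n\<close> that] by blast
    have start_a: "inv_into Adom F L0 = ?a 0"
      using start \<open>0 < n\<close> by (simp add: cont_target_eq)
    have steps_a: "dist (?a (Suc k)) (?a k) < \<rho> / 2" if "k < n" for k
    proof (rule ucont)
      show "cont_target n L0 Lstar k \<in> ?S" "cont_target n L0 Lstar (Suc k) \<in> ?S"
        using that by (simp_all add: cont_target_in_segment[OF \<open>0 < n\<close>])
      show "dist (cont_target n L0 Lstar (Suc k)) (cont_target n L0 Lstar k) < dG"
        using that step by (simp add: dist_cont_target_Suc)
    qed
    have "?a n = G Lstar" using \<open>0 < n\<close> by (simp add: cont_target_eq)
    then show ?thesis
      using cont_fin_tracks_roots[where a = ?a, OF \<open>m > 0\<close> \<open>0 < \<sigma>\<close> bounds(1) roots_a start_a steps_a]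
        bounds(2) by simp
  qed
  show ?thesis
  proof (rule that[OF _ _ main])
    show "\<sigma>0 > 0" unfolding \<sigma>0_def using \<open>m > 0\<close> \<open>\<rho> > 0\<close> \<open>\<epsilon> > 0\<close> by simp
    show "N0 \<ge> 1" unfolding N0_def by simp
  qed
qed

theorem theorem6p1:
  fixes F :: "real^'d \<Rightarrow> real^'d"
    and F' :: "real^'d \<Rightarrow> real^'d^'d"
    and F'' :: "real^'d \<Rightarrow> ((real^'d) \<Rightarrow>\<^sub>L (real^'d^'d))"
    and Adom \<Omega> :: "(real^'d) set"
    and L0 Lstar Astar :: "real^'d"
  assumes "open Adom" and "connected Adom"
    and "open \<Omega>" and "convex \<Omega>"
    and homeo: "\<exists>G. homeomorphism Adom \<Omega> F G"
    and deriv1: "\<forall>x\<in>Adom. (F has_derivative (\<lambda>h. F' x *v h)) (at x)"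
    and deriv2: "\<forall>x\<in>Adom. (F' has_derivative blinfun_apply (F'' x)) (at x)"
    and cont2: "continuous_on Adom F''"
    and det: "\<forall>x\<in>Adom. det (F' x) \<noteq> 0"
    and "L0 \<in> \<Omega>" and "Lstar \<in> \<Omega>"
    and "Astar \<in> Adom" and "F Astar = Lstar"
  shows "\<forall>\<epsilon>>0. \<exists>\<sigma>0>0. \<exists>N0::nat. N0 \<ge> 1 \<and>
           (\<forall>n>N0. \<forall>\<sigma>. 0 < \<sigma> \<and> \<sigma> < \<sigma>0 \<longrightarrow>
              cont_well_defined F F' Adom L0 Lstar n \<sigma> \<and>
              norm (cont_fin F F' Adom L0 Lstar n \<sigma> n - Astar) < \<epsilon>)"
proof (intro allI impI)
  fix \<epsilon> :: real assume "\<epsilon> > 0"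
  obtain G where hG: "homeomorphism Adom \<Omega> F G" using homeo by blast
  let ?S = "closed_segment L0 Lstar"
  have "?S \<subseteq> \<Omega>" using \<open>convex \<Omega>\<close> \<open>L0 \<in> \<Omega>\<close> \<open>Lstar \<in> \<Omega>\<close> by (simp add: convex_contains_segment)
  then have contG: "continuous_on ?S G" and GS: "G ` ?S \<subseteq> Adom"
    and FG: "\<And>y. y \<in> ?S \<Longrightarrow> F (G y) = y"
    using hG unfolding homeomorphism_def by (auto intro: continuous_on_subset)
  have "continuous_on Adom F'"
    using deriv2 by (meson continuous_at_imp_continuous_on has_derivative_continuous)
  then obtain m \<rho> where "m > 0" and "\<rho> > 0" and balls: "\<And>a. a \<in> G ` ?S \<Longrightarrow> newton_ball F F' Adom m a \<rho>"
    using uniform_newton_balls[OF \<open>open Adom\<close> compact_continuous_image[OF contG compact_segment] GS]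
      deriv1 det by blast
  have "F (G y) = y \<and> isCont F (G y) \<and> newton_ball F F' Adom m (G y) \<rho>" if "y \<in> ?S" for y
    using FG[OF that] balls[of "G y"] GS that deriv1 has_derivative_continuous by blast
  moreover have "inv_into Adom F L0 = G L0"
    using hG \<open>L0 \<in> \<Omega>\<close> unfolding homeomorphism_def by (metis image_eqI inj_on_inverseI inv_into_f_f)
  moreover have "G Lstar = Astar"
    using hG \<open>Astar \<in> Adom\<close> \<open>F Astar = Lstar\<close> unfolding homeomorphism_def by blast
  ultimately obtain \<sigma>0 N0 where "\<sigma>0 > 0" "N0 \<ge> 1"
    and "\<And>n \<sigma>. N0 < n \<Longrightarrow> 0 < \<sigma> \<Longrightarrow> \<sigma> < \<sigma>0 \<Longrightarrow>
       cont_well_defined F F' Adom L0 Lstar n \<sigma> \<and> norm (cont_fin F F' Adom L0 Lstar n \<sigma> n - Astar) < \<epsilon>"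
    using cont_fin_converges[OF contG _ \<open>m > 0\<close> \<open>\<rho> > 0\<close> _ \<open>\<epsilon> > 0\<close>] by metis
  then show "\<exists>\<sigma>0>0. \<exists>N0::nat. N0 \<ge> 1 \<and> (\<forall>n>N0. \<forall>\<sigma>. 0 < \<sigma> \<and> \<sigma> < \<sigma>0 \<longrightarrow>
      cont_well_defined F F' Adom L0 Lstar n \<sigma> \<and> norm (cont_fin F F' Adom L0 Lstar n \<sigma> n - Astar) < \<epsilon>)"
    by blast
qed

end
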